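(* Let $\psi\in C^1(\mathbb{R})$ satisfy: $\psi(0)=1$, $\psi$ is even, there exist $C>0$ and $\delta>1$ with $|\psi(x)|+|x\psi'(x)|\leq C\langle x\rangle^{-\delta}$ for all $x\in\mathbb{R}$, and $A_\psi:=\int_{\mathbb{R}}\psi(x)\,\mathrm{d}x\neq 0$. Let $\mu$ be a probability measure on $\mathbb{R}$. Then: 1. For every continuous function $f$ of compact support, $\lim_{a\to 0}\int(\tilde{\psi}_a*\mu)(x)f(x)\,\mathrm{d}x=A_\psi\int f(x)\,\mathrm{d}\mu(x)$. 2. For every $x\in\mathbb{R}$, $\lim_{a\to 0}(\psi_a*\mu)(x)=\mu(\{x\})$. 3. If $0<\alpha\leq 1$ and $(d_\alpha\mu)(x)$ exists and is finite, then $\lim_{a\to 0}a^{-\alpha}(\psi_a*\mu)(x)=c_\alpha(d_\alpha\mu)(x)$, where $c_\alpha=\int_0^\infty \alpha 2^\alpha y^{\alpha-1}\psi(y)\,\mathrm{d}y$.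
   Context: $\langle x\rangle=(1+x^2)^{1/2}$. For $a>0$, $\psi_a(x)=\psi(x/a)$ and $\tilde{\psi}_a(x)=\frac{1}{a}\psi_a(x)$. The convolution is $(f*\mu)(x)=\int f(x-y)\,\mathrm{d}\mu(y)$. For $0\leq\alpha\leq1$, $(d_\alpha\mu)(x)=\lim_{\varepsilon\downarrow0}\mu((x-\varepsilon,x+\varepsilon))/(2\varepsilon)^\alpha$ whenever this limit exists. Limits $a\to0$ are over $a>0$. *)

theory Defs
  imports "HOL-Probability.Probability"
begin

definition jbr :: "real \<Rightarrow> real" where
  "jbr x = sqrt (1 + x\<^sup>2)"

definition dil :: "(real \<Rightarrow> real) \<Rightarrow> real \<Rightarrow> real \<Rightarrow> real" where
  "dil \<psi> a x = \<psi> (x / a)"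

definition dil_tilde :: "(real \<Rightarrow> real) \<Rightarrow> real \<Rightarrow> real \<Rightarrow> real" where
  "dil_tilde \<psi> a x = (1 / a) * dil \<psi> a x"

definition conv_meas :: "(real \<Rightarrow> real) \<Rightarrow> real measure \<Rightarrow> real \<Rightarrow> real" where
  "conv_meas f \<mu> x = (\<integral>y. f (x - y) \<partial>\<mu>)"

end

theory Submission
  imports Defs
begin

text \<open>
  Write \<open>(\<psi>\<^sub>a * \<mu>)(x) = \<integral> \<psi>((x - y)/a) d\<mu>(y)\<close>; all three limits come from dominated convergence.
  In part 1, Fubini and the substitution \<open>x = y + a t\<close> turn the pairing with \<open>f\<close> into
  \<open>\<integral>\<integral> \<psi>(t) f(y + a t) dt d\<mu>(y)\<close>, whose integrand tends to \<open>\<psi>(t) f(y)\<close>.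
  In part 2, \<open>\<psi>((x - y)/a)\<close> tends to the indicator of \<open>{x}\<close>, since \<open>\<psi>(0) = 1\<close> and \<open>\<psi>\<close>
  vanishes at infinity.
  In part 3, evenness and \<open>\<psi>(s) = - \<integral>\<^sub>s\<^sup>\<infinity> \<psi>'\<close> give the layer-cake formula
  \<open>(\<psi>\<^sub>a * \<mu>)(x) = - \<integral>\<^sub>0\<^sup>\<infinity> \<psi>'(t) \<mu>((x - a t, x + a t)) dt\<close>, so
  \<open>a\<^sup>-\<^sup>\<alpha> (\<psi>\<^sub>a * \<mu>)(x) = - \<integral>\<^sub>0\<^sup>\<infinity> 2\<^sup>\<alpha> t\<^sup>\<alpha> \<psi>'(t) g(a t) dt\<close> with
  \<open>g(r) = \<mu>((x - r, x + r)) / (2r)\<^sup>\<alpha>\<close>. The ratio \<open>g\<close> is bounded on \<open>(0, \<infinity>)\<close> and tends to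
  \<open>(d\<^sub>\<alpha>\<mu>)(x)\<close>, and an integration by parts turns \<open>- \<integral>\<^sub>0\<^sup>\<infinity> 2\<^sup>\<alpha> t\<^sup>\<alpha> \<psi>'(t) dt\<close> into \<open>c\<^sub>\<alpha>\<close>.
\<close>

lemma integral_dominated_convergence_at_right_0:
  fixes s :: "real \<Rightarrow> 'a \<Rightarrow> real" and f w :: "'a \<Rightarrow> real"
  assumes "f \<in> borel_measurable M" "\<And>t. s t \<in> borel_measurable M" "integrable M w"
    and lim: "AE x in M. ((\<lambda>t. s t x) \<longlongrightarrow> f x) (at_right 0)"
    and bound: "\<forall>\<^sub>F t in at_right 0. AE x in M. norm (s t x) \<le> w x"
  shows "((\<lambda>t. integral\<^sup>L M (s t)) \<longlongrightarrow> integral\<^sup>L M f) (at_right 0)"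
  unfolding filterlim_at_right_to_top
proof (rule integral_dominated_convergence_at_top[where w = w])
  show "AE x in M. ((\<lambda>t. s (inverse t) x) \<longlongrightarrow> f x) at_top"
    using lim by eventually_elim (simp add: filterlim_at_right_to_top)
  show "\<forall>\<^sub>F t in at_top. AE x in M. norm (s (inverse t) x) \<le> w x"
    using bound by (simp add: eventually_at_right_to_top)
qed (use assms in auto)

lemma set_integrable_Ioi_powr_bounds:
  fixes g :: "real \<Rightarrow> real"
  assumes [measurable]: "g \<in> borel_measurable borel" and "e > -1" and "e' < -1"
    and near_0: "\<And>y. 0 < y \<Longrightarrow> y \<le> 1 \<Longrightarrow> \<bar>g y\<bar> \<le> K * y powr e"
    and near_top: "\<And>y. 1 < y \<Longrightarrow> \<bar>g y\<bar> \<le> K * y powr e'"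
  shows "set_integrable lborel {0<..} g"
proof -
  have "(\<lambda>t. t powr e) integrable_on {0..1}"
    by (rule integrable_on_powr_from_0) (use \<open>e > -1\<close> in auto)
  then have "(\<lambda>t. t powr e) absolutely_integrable_on {0..1}"
    by (subst absolutely_integrable_on_iff_nonneg) auto
  then have "set_integrable lborel {0..1} (\<lambda>t. t powr e)"
    unfolding set_integrable_def by (subst (asm) integrable_completion) auto
  then have J1: "set_integrable lborel {0<..1} g"
  proof (rule set_integrable_bound[OF set_integrable_mult_right[OF set_integrable_subset]])
    show "AE y in lborel. y \<in> {0<..1} \<longrightarrow> norm (g y) \<le> norm (K * y powr e)"
      by (intro AE_I2 impI) (auto intro!: order_trans[OF near_0 abs_ge_self])
  qed (auto simp: set_borel_measurable_def)
  have "((\<lambda>t. t powr e') has_integral -(1 powr (e'+1)) / (e'+1)) {1..}"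
    by (rule has_integral_powr_to_inf) (use \<open>e' < -1\<close> in auto)
  then have "(\<lambda>t. t powr e') absolutely_integrable_on {1..}"
    by (subst absolutely_integrable_on_iff_nonneg) auto
  then have "set_integrable lborel {1..} (\<lambda>t. t powr e')"
    unfolding set_integrable_def by (subst (asm) integrable_completion) auto
  then have J2: "set_integrable lborel {1<..} g"
  proof (rule set_integrable_bound[OF set_integrable_mult_right[OF set_integrable_subset]])
    show "AE y in lborel. y \<in> {1<..} \<longrightarrow> norm (g y) \<le> norm (K * y powr e')"
      by (intro AE_I2 impI) (auto intro!: order_trans[OF near_top abs_ge_self])
  qed (auto simp: set_borel_measurable_def)
  have "{0<..1} \<union> {1<..} = ({0<..} :: real set)" by auto
  with set_integrable_Un[OF J1 J2] show ?thesis by simp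
qed

lemma integrable_lborel_if_even:
  fixes f :: "real \<Rightarrow> real"
  assumes [measurable]: "f \<in> borel_measurable borel"
    and even: "\<And>x. f (- x) = f x" and "set_integrable lborel {0<..} f"
  shows "integrable lborel f"
proof -
  have pos: "integrable lborel (\<lambda>x. indicator {0<..} x * f x)"
    using assms(3) by (simp add: set_integrable_def)
  have neg: "integrable lborel (\<lambda>x. indicator {0<..} (- x) * f x)"
    using lborel_integrable_real_affine[OF pos, of "-1" 0] by (simp add: even)
  have "AE x in lborel. indicator {0<..} x * f x + indicator {0<..} (- x) * f x = f x"
    using AE_lborel_singleton[of 0] by eventually_elim (auto simp: indicator_def)
  with Bochner_Integration.integrable_add[OF pos neg] show ?thesis
    by (subst (asm) integrable_cong_AE) auto
qed

lemma bounded_if_compact_support: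
  fixes f :: "'a::topological_space \<Rightarrow> real"
  assumes "continuous_on UNIV f" and "compact K" and "\<And>x. x \<notin> K \<Longrightarrow> f x = 0"
  shows "\<exists>B. \<forall>x. \<bar>f x\<bar> \<le> B"
proof -
  obtain B where "\<forall>y\<in>f ` K. norm y \<le> B"
    using compact_imp_bounded[OF compact_continuous_image[OF continuous_on_subset[OF assms(1)] assms(2)]]
    by (auto simp: bounded_iff)
  then have "\<bar>f x\<bar> \<le> max B 0" for x
    using assms(3)[of x] by (cases "x \<in> K") auto
  then show ?thesis
    by blast
qed

lemma conv_meas_dil_tendsto_measure_singleton:
  fixes \<psi> :: "real \<Rightarrow> real"
  assumes "prob_space \<mu>" and [measurable_cong]: "sets \<mu> = sets borel"
    and [measurable]: "\<psi> \<in> borel_measurable borel" and bounded: "\<And>t. \<bar>\<psi> t\<bar> \<le> B"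
    and "\<psi> 0 = 1" and vanishing: "(\<psi> \<longlongrightarrow> 0) at_infinity"
  shows "((\<lambda>a. conv_meas (dil \<psi> a) \<mu> x) \<longlongrightarrow> measure \<mu> {x}) (at_right 0)"
proof -
  interpret prob_space \<mu> by fact
  have pointwise: "((\<lambda>a. \<psi> ((x - y) / a)) \<longlongrightarrow> indicator {x} y) (at_right 0)" for y
  proof (cases "y = x")
    case False
    then have "filterlim (\<lambda>a. (x - y) / a) at_infinity (at_right 0)"
      by (intro filterlim_divide_at_infinity[OF tendsto_const]
            filterlim_mono[OF filterlim_ident at_within_le_at order_refl]) auto
    with False show ?thesis
      using filterlim_compose[OF vanishing] by simp
  qed (simp add: \<open>\<psi> 0 = 1\<close>)
  have "((\<lambda>a. \<integral>y. \<psi> ((x - y) / a) \<partial>\<mu>) \<longlongrightarrow> \<integral>y. indicator {x} y \<partial>\<mu>) (at_right 0)"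
    by (rule integral_dominated_convergence_at_right_0[where w = "\<lambda>_. B"])
      (use bounded pointwise in auto)
  moreover have "(\<integral>y. indicator {x} y \<partial>\<mu>) = measure \<mu> {x}"
    by simp
  ultimately show ?thesis
    by (simp add: conv_meas_def dil_def)
qed

lemma integrable_pair_dil_tilde_mult:
  fixes \<psi> f :: "real \<Rightarrow> real"
  assumes "prob_space \<mu>" and [measurable_cong]: "sets \<mu> = sets borel"
    and \<psi>: "integrable lborel \<psi>"
    and [measurable]: "f \<in> borel_measurable borel" and f_bounded: "\<And>x. \<bar>f x\<bar> \<le> B"
    and "a > 0"
  shows "integrable (\<mu> \<Otimes>\<^sub>M lborel) (\<lambda>(y, x). dil_tilde \<psi> a (x - y) * f x)"
proof -
  interpret prob_space \<mu> by fact
  interpret pair_sigma_finite \<mu> lborel ..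
  have [measurable]: "\<psi> \<in> borel_measurable borel"
    using borel_measurable_integrable[OF \<psi>] by simp
  define k where "k y x = dil_tilde \<psi> a (x - y) * f x" for y x
  have [measurable]: "case_prod k \<in> borel_measurable (\<mu> \<Otimes>\<^sub>M lborel)"
    unfolding k_def dil_tilde_def dil_def by measurable
  have "B \<ge> 0"
    using f_bounded[of 0] by linarith
  have \<psi>_B: "integrable lborel (\<lambda>t. \<bar>\<psi> t\<bar> * B)"
    using \<psi> by (intro integrable_mult_left integrable_abs)
  have substitution: "(\<integral>x. g x \<partial>lborel) = (\<integral>t. a * g (y + a * t) \<partial>lborel)" for g :: "real \<Rightarrow> real" and y
    using lborel_integral_real_affine[of a g y] \<open>a > 0\<close> by simp
  have k_affine: "a * k y (y + a * t) = \<psi> t * f (y + a * t)" for y t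
    using \<open>a > 0\<close> by (simp add: k_def dil_tilde_def dil_def)
  have "integrable lborel (k y)" for y
  proof -
    have "integrable lborel (\<lambda>t. \<psi> t * f (y + a * t))"
      by (rule Bochner_Integration.integrable_bound[OF \<psi>_B])
        (use \<open>B \<ge> 0\<close> in \<open>auto simp: abs_mult intro!: mult_left_mono f_bounded\<close>)
    then show ?thesis
      using lborel_integrable_real_affine_iff[of a "\<lambda>x. a * k y x" y] \<open>a > 0\<close> by (simp add: k_affine)
  qed
  moreover have "(\<integral>x. norm (k y x) \<partial>lborel) \<le> (\<integral>t. \<bar>\<psi> t\<bar> * B \<partial>lborel)" for y
  proof -
    have "(\<integral>x. norm (k y x) \<partial>lborel) = (\<integral>t. \<bar>\<psi> t\<bar> * \<bar>f (y + a * t)\<bar> \<partial>lborel)"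
      using \<open>a > 0\<close> by (subst substitution[of _ y]) (simp add: k_def dil_tilde_def dil_def abs_mult)
    also have "\<dots> \<le> (\<integral>t. \<bar>\<psi> t\<bar> * B \<partial>lborel)"
      using \<open>B \<ge> 0\<close> by (intro integral_mono'[OF \<psi>_B] mult_left_mono f_bounded) auto
    finally show ?thesis .
  qed
  then have "integrable \<mu> (\<lambda>y. \<integral>x. norm (k y x) \<partial>lborel)"
    by (intro integrable_const_bound[where B = "\<integral>t. \<bar>\<psi> t\<bar> * B \<partial>lborel"])
      (simp_all add: integral_nonneg, measurable)
  ultimately have "integrable (\<mu> \<Otimes>\<^sub>M lborel) (case_prod k)"
    by (intro Fubini_integrable) auto
  then show ?thesis
    unfolding k_def[abs_def] .
qed

lemma integral_conv_meas_dil_tilde_mult: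
  fixes \<psi> f :: "real \<Rightarrow> real"
  assumes "prob_space \<mu>" and [measurable_cong]: "sets \<mu> = sets borel"
    and \<psi>: "integrable lborel \<psi>"
    and [measurable]: "f \<in> borel_measurable borel" and f_bounded: "\<And>x. \<bar>f x\<bar> \<le> B"
    and "a > 0"
  shows "(\<integral>x. conv_meas (dil_tilde \<psi> a) \<mu> x * f x \<partial>lborel)
    = (\<integral>y. (\<integral>t. \<psi> t * f (y + a * t) \<partial>lborel) \<partial>\<mu>)"
proof -
  interpret prob_space \<mu> by fact
  interpret pair_sigma_finite \<mu> lborel ..
  have "(\<integral>x. conv_meas (dil_tilde \<psi> a) \<mu> x * f x \<partial>lborel)
      = (\<integral>x. (\<integral>y. dil_tilde \<psi> a (x - y) * f x \<partial>\<mu>) \<partial>lborel)"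
    by (simp add: conv_meas_def)
  also have "\<dots> = (\<integral>y. (\<integral>x. dil_tilde \<psi> a (x - y) * f x \<partial>lborel) \<partial>\<mu>)"
    using integrable_pair_dil_tilde_mult[OF assms] by (rule Fubini_integral)
  also have "\<dots> = (\<integral>y. (\<integral>t. \<psi> t * f (y + a * t) \<partial>lborel) \<partial>\<mu>)"
  proof (rule Bochner_Integration.integral_cong[OF refl])
    fix y
    show "(\<integral>x. dil_tilde \<psi> a (x - y) * f x \<partial>lborel) = (\<integral>t. \<psi> t * f (y + a * t) \<partial>lborel)"
      using lborel_integral_real_affine[of a "\<lambda>x. dil_tilde \<psi> a (x - y) * f x" y] \<open>a > 0\<close>
      by (simp add: dil_tilde_def dil_def)
  qed
  finally show ?thesis .
qed

lemma tendsto_integral_conv_meas_dil_tilde_mult: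
  fixes \<psi> f :: "real \<Rightarrow> real"
  assumes "prob_space \<mu>" and [measurable_cong]: "sets \<mu> = sets borel"
    and \<psi>: "integrable lborel \<psi>"
    and f_cont: "continuous_on UNIV f" and f_bounded: "\<And>x. \<bar>f x\<bar> \<le> B"
  shows "((\<lambda>a. \<integral>x. conv_meas (dil_tilde \<psi> a) \<mu> x * f x \<partial>lborel)
          \<longlongrightarrow> (\<integral>x. \<psi> x \<partial>lborel) * (\<integral>x. f x \<partial>\<mu>)) (at_right 0)"
proof -
  interpret prob_space \<mu> by fact
  have [measurable]: "\<psi> \<in> borel_measurable borel" "f \<in> borel_measurable borel"
    using borel_measurable_integrable[OF \<psi>] borel_measurable_continuous_onI[OF f_cont] by simp_all
  define G where "G a y = (\<integral>t. \<psi> t * f (y + a * t) \<partial>lborel)" for a y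
  have \<psi>_B: "integrable lborel (\<lambda>t. \<bar>\<psi> t\<bar> * B)"
    using \<psi> by (intro integrable_mult_left integrable_abs)
  have \<psi>f_bound: "norm (\<psi> t * f (y + a * t)) \<le> \<bar>\<psi> t\<bar> * B" for t y a
    by (simp add: abs_mult mult_left_mono f_bounded)
  have "B \<ge> 0"
    using f_bounded[of 0] by linarith
  have G_lim: "((\<lambda>a. G a y) \<longlongrightarrow> (\<integral>t. \<psi> t * f y \<partial>lborel)) (at_right 0)" for y
    unfolding G_def
  proof (rule integral_dominated_convergence_at_right_0[OF _ _ \<psi>_B])
    show "AE t in lborel. ((\<lambda>a. \<psi> t * f (y + a * t)) \<longlongrightarrow> \<psi> t * f y) (at_right 0)"
    proof (intro AE_I2 tendsto_mult_left)
      fix t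
      have "((\<lambda>a. y + a * t) \<longlongrightarrow> y) (at_right 0)"
        by (auto intro!: tendsto_eq_intros)
      then show "((\<lambda>a. f (y + a * t)) \<longlongrightarrow> f y) (at_right 0)"
        using f_cont by (intro isCont_tendsto_compose[where g = f]) (auto simp: continuous_on_eq_continuous_at)
    qed
  qed (use \<psi>f_bound in auto)
  have G_bound: "norm (G a y) \<le> (\<integral>t. \<bar>\<psi> t\<bar> * B \<partial>lborel)" for a y
    unfolding G_def by (rule Bochner_Integration.integral_norm_bound_integral[OF Bochner_Integration.integrable_bound[OF \<psi>_B] \<psi>_B])
      (use \<open>B \<ge> 0\<close> \<psi>f_bound in auto)
  have "((\<lambda>a. \<integral>y. G a y \<partial>\<mu>) \<longlongrightarrow> \<integral>y. (\<integral>t. \<psi> t \<partial>lborel) * f y \<partial>\<mu>) (at_right 0)"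
  proof (rule integral_dominated_convergence_at_right_0[where w = "\<lambda>_. \<integral>t. \<bar>\<psi> t\<bar> * B \<partial>lborel"])
    show "AE y in \<mu>. ((\<lambda>a. G a y) \<longlongrightarrow> (\<integral>t. \<psi> t \<partial>lborel) * f y) (at_right 0)"
      using G_lim by simp
  qed (use G_bound in \<open>auto simp: G_def\<close>)
  moreover have "\<forall>\<^sub>F a in at_right 0. (\<integral>y. G a y \<partial>\<mu>) = (\<integral>x. conv_meas (dil_tilde \<psi> a) \<mu> x * f x \<partial>lborel)"
    using eventually_at_right_less[of 0]
    by eventually_elim (simp add: G_def integral_conv_meas_dil_tilde_mult[OF assms(1,2) \<psi> _ f_bounded])
  ultimately show ?thesis
    by (simp add: tendsto_cong)
qed

lemma tendsto_set_integral_mult_dilation: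
  fixes \<Phi> g :: "real \<Rightarrow> real"
  assumes \<Phi>: "set_integrable lborel {0<..} \<Phi>" and [measurable]: "g \<in> borel_measurable borel"
    and bounded: "\<And>r. 0 < r \<Longrightarrow> \<bar>g r\<bar> \<le> M" and lim: "(g \<longlongrightarrow> L) (at_right 0)"
  shows "((\<lambda>a. LBINT t:{0<..}. \<Phi> t * g (a * t)) \<longlongrightarrow> (LBINT t:{0<..}. \<Phi> t) * L) (at_right 0)"
proof -
  define \<Phi>\<^sub>0 where "\<Phi>\<^sub>0 = (\<lambda>t. indicator {0<..} t * \<Phi> t)"
  have \<Phi>\<^sub>0: "integrable lborel \<Phi>\<^sub>0"
    using \<Phi> by (simp add: set_integrable_def \<Phi>\<^sub>0_def)
  then have [measurable]: "\<Phi>\<^sub>0 \<in> borel_measurable borel"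
    using borel_measurable_integrable by simp
  have pointwise: "((\<lambda>a. \<Phi>\<^sub>0 t * g (a * t)) \<longlongrightarrow> \<Phi>\<^sub>0 t * L) (at_right 0)" for t
  proof (cases "t > 0")
    case True
    then have "filterlim (\<lambda>a. a * t) (at_right 0) (at_right 0)"
      by (intro tendsto_imp_filterlim_at_right)
        (auto intro!: tendsto_eq_intros eventually_at_right_less[THEN eventually_mono])
    then show ?thesis
      by (intro tendsto_mult_left filterlim_compose[OF lim])
  qed (simp add: \<Phi>\<^sub>0_def)
  have dominated: "norm (\<Phi>\<^sub>0 t * g (a * t)) \<le> \<bar>\<Phi>\<^sub>0 t\<bar> * M" if "a > 0" for a t
  proof (cases "t > 0")
    case True
    then have "\<bar>g (a * t)\<bar> \<le> M"
      using that by (intro bounded) simp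
    then show ?thesis
      by (simp add: abs_mult mult_left_mono)
  qed (simp add: \<Phi>\<^sub>0_def)
  have "((\<lambda>a. \<integral>t. \<Phi>\<^sub>0 t * g (a * t) \<partial>lborel) \<longlongrightarrow> \<integral>t. \<Phi>\<^sub>0 t * L \<partial>lborel) (at_right 0)"
  proof (rule integral_dominated_convergence_at_right_0[where w = "\<lambda>t. \<bar>\<Phi>\<^sub>0 t\<bar> * M"])
    show "\<forall>\<^sub>F a in at_right 0. AE t in lborel. norm (\<Phi>\<^sub>0 t * g (a * t)) \<le> \<bar>\<Phi>\<^sub>0 t\<bar> * M"
      using eventually_at_right_less[of "0::real"] by eventually_elim (intro AE_I2 dominated)
  qed (use \<Phi>\<^sub>0 pointwise in auto)
  moreover have "(\<integral>t. \<Phi>\<^sub>0 t * L \<partial>lborel) = (LBINT t:{0<..}. \<Phi> t) * L"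
    by (simp add: set_lebesgue_integral_def \<Phi>\<^sub>0_def)
  moreover have "(\<integral>t. \<Phi>\<^sub>0 t * g (a * t) \<partial>lborel) = (LBINT t:{0<..}. \<Phi> t * g (a * t))" for a
    by (simp add: set_lebesgue_integral_def \<Phi>\<^sub>0_def mult.assoc)
  ultimately show ?thesis
    by (simp only:)
qed

lemma measure_Ioo_ratio_bounded:
  assumes "prob_space \<mu>" and "\<alpha> > 0"
    and lim: "((\<lambda>r. measure \<mu> {x - r<..<x + r} / (2 * r) powr \<alpha>) \<longlongrightarrow> L) (at_right 0)"
  shows "\<exists>M. \<forall>r>0. \<bar>measure \<mu> {x - r<..<x + r} / (2 * r) powr \<alpha>\<bar> \<le> M"
proof -
  interpret prob_space \<mu> by fact
  obtain b where "b > 0"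
    and near_0: "\<And>r. 0 < r \<Longrightarrow> r < b \<Longrightarrow> dist (measure \<mu> {x - r<..<x + r} / (2 * r) powr \<alpha>) L < 1"
    using tendstoD[OF lim, of 1] unfolding eventually_at_right_field by auto
  have "\<bar>measure \<mu> {x - r<..<x + r} / (2 * r) powr \<alpha>\<bar> \<le> max (\<bar>L\<bar> + 1) (1 / (2 * b) powr \<alpha>)"
    if "r > 0" for r
  proof (cases "r < b")
    case True
    then show ?thesis
      using near_0[OF \<open>r > 0\<close>] by (simp add: dist_real_def)
  next
    case False
    have "\<bar>measure \<mu> {x - r<..<x + r} / (2 * r) powr \<alpha>\<bar> \<le> 1 / (2 * r) powr \<alpha>"
      using \<open>r > 0\<close> by (simp add: divide_right_mono)
    also have "\<dots> \<le> 1 / (2 * b) powr \<alpha>"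
      using False \<open>b > 0\<close> \<open>\<alpha> > 0\<close> by (intro divide_left_mono powr_mono2) auto
    finally show ?thesis
      by simp
  qed
  then show ?thesis
    by blast
qed

context
  fixes \<psi> \<psi>' :: "real \<Rightarrow> real" and C \<delta> :: real
  assumes has_deriv: "\<And>x. (\<psi> has_real_derivative \<psi>' x) (at x)"
    and deriv_cont: "continuous_on UNIV \<psi>'"
    and decay: "\<And>y. 0 < y \<Longrightarrow> \<bar>\<psi> y\<bar> \<le> C * y powr - \<delta>"
    and deriv_decay: "\<And>y. 0 < y \<Longrightarrow> \<bar>\<psi>' y\<bar> \<le> C * y powr (- \<delta> - 1)"
    and "\<delta> > 0"
begin

lemma isCont_decaying: "isCont \<psi> x"
  using has_deriv by (rule DERIV_isCont)

lemma measurable_decaying [measurable]: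
  "\<psi> \<in> borel_measurable borel" "\<psi>' \<in> borel_measurable borel"
  using isCont_decaying deriv_cont
  by (auto intro!: borel_measurable_continuous_onI continuous_at_imp_continuous_on)

lemma decaying_bounded_near_0: "\<exists>M. \<forall>t\<in>{0..1}. \<bar>\<psi> t\<bar> \<le> M \<and> \<bar>\<psi>' t\<bar> \<le> M"
proof -
  have bounded: "\<exists>M. \<forall>t\<in>{0..1}. \<bar>f t\<bar> \<le> M" if "continuous_on {0..1} f" for f :: "real \<Rightarrow> real"
    using compact_imp_bounded[OF compact_continuous_image[OF that compact_Icc]]
    by (simp add: bounded_iff)
  have "\<exists>M. \<forall>t\<in>{0..1}. \<bar>\<psi> t\<bar> \<le> M"
    using isCont_decaying by (intro bounded continuous_at_imp_continuous_on) auto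
  moreover have "\<exists>M. \<forall>t\<in>{0..1}. \<bar>\<psi>' t\<bar> \<le> M"
    by (intro bounded continuous_on_subset[OF deriv_cont]) simp
  ultimately obtain M\<^sub>1 M\<^sub>2 where "\<forall>t\<in>{0..1}. \<bar>\<psi> t\<bar> \<le> M\<^sub>1" "\<forall>t\<in>{0..1}. \<bar>\<psi>' t\<bar> \<le> M\<^sub>2"
    by blast
  then show ?thesis
    by (intro exI[of _ "max M\<^sub>1 M\<^sub>2"]) (simp add: le_max_iff_disj)
qed

lemma set_integrable_powr_mult_deriv:
  assumes "0 \<le> \<alpha>" "\<alpha> < \<delta>"
  shows "set_integrable lborel {0<..} (\<lambda>t. t powr \<alpha> * \<psi>' t)"
proof -
  obtain M where M: "\<forall>t\<in>{0..1}. \<bar>\<psi> t\<bar> \<le> M \<and> \<bar>\<psi>' t\<bar> \<le> M"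
    using decaying_bounded_near_0 by blast
  show ?thesis
  proof (rule set_integrable_Ioi_powr_bounds[where e = 0 and e' = "\<alpha> - \<delta> - 1" and K = "max M C"])
    show "\<bar>t powr \<alpha> * \<psi>' t\<bar> \<le> max M C * t powr 0" if "0 < t" "t \<le> 1" for t
    proof -
      have "t powr \<alpha> \<le> 1"
        using that assms by (intro powr_le1) auto
      then have "\<bar>t powr \<alpha> * \<psi>' t\<bar> \<le> 1 * M"
        unfolding abs_mult using that M by (intro mult_mono) auto
      then show ?thesis
        using that by simp
    qed
    show "\<bar>t powr \<alpha> * \<psi>' t\<bar> \<le> max M C * t powr (\<alpha> - \<delta> - 1)" if "1 < t" for t
    proof -
      have "\<bar>t powr \<alpha> * \<psi>' t\<bar> = t powr \<alpha> * \<bar>\<psi>' t\<bar>"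
        by (simp add: abs_mult)
      also have "\<dots> \<le> t powr \<alpha> * (C * t powr (- \<delta> - 1))"
        using that by (intro mult_left_mono deriv_decay) auto
      also have "\<dots> = C * t powr (\<alpha> - \<delta> - 1)"
        by (simp add: mult.left_commute powr_add[symmetric] add_diff_eq)
      also have "\<dots> \<le> max M C * t powr (\<alpha> - \<delta> - 1)"
        by (intro mult_right_mono) auto
      finally show ?thesis .
    qed
    show "(\<lambda>t. t powr \<alpha> * \<psi>' t) \<in> borel_measurable borel"
      by measurable
  qed (use assms in simp_all)
qed

lemma set_integrable_deriv: "set_integrable lborel {0<..} \<psi>'"
proof -
  have "set_integrable lborel {0<..} (\<lambda>t. t powr 0 * \<psi>' t)"
    using \<open>\<delta> > 0\<close> by (intro set_integrable_powr_mult_deriv) auto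
  then show ?thesis
    by (rule set_integrable_cong[THEN iffD1, rotated -1]) auto
qed

lemma set_integrable_powr_mult:
  assumes "0 < \<alpha>" "\<alpha> < \<delta>"
  shows "set_integrable lborel {0<..} (\<lambda>t. t powr (\<alpha> - 1) * \<psi> t)"
proof -
  obtain M where M: "\<forall>t\<in>{0..1}. \<bar>\<psi> t\<bar> \<le> M \<and> \<bar>\<psi>' t\<bar> \<le> M"
    using decaying_bounded_near_0 by blast
  show ?thesis
  proof (rule set_integrable_Ioi_powr_bounds[where e = "\<alpha> - 1" and e' = "\<alpha> - 1 - \<delta>" and K = "max M C"])
    show "\<bar>t powr (\<alpha> - 1) * \<psi> t\<bar> \<le> max M C * t powr (\<alpha> - 1)" if "0 < t" "t \<le> 1" for t
    proof -
      have "\<bar>t powr (\<alpha> - 1) * \<psi> t\<bar> = t powr (\<alpha> - 1) * \<bar>\<psi> t\<bar>"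
        by (simp add: abs_mult)
      also have "\<dots> \<le> t powr (\<alpha> - 1) * max M C"
        using that M by (intro mult_left_mono) (auto simp: le_max_iff_disj)
      finally show ?thesis
        by (simp only: mult.commute)
    qed
    show "\<bar>t powr (\<alpha> - 1) * \<psi> t\<bar> \<le> max M C * t powr (\<alpha> - 1 - \<delta>)" if "1 < t" for t
    proof -
      have "\<bar>t powr (\<alpha> - 1) * \<psi> t\<bar> = t powr (\<alpha> - 1) * \<bar>\<psi> t\<bar>"
        by (simp add: abs_mult)
      also have "\<dots> \<le> t powr (\<alpha> - 1) * (C * t powr - \<delta>)"
        using that by (intro mult_left_mono decay) auto
      also have "\<dots> = C * t powr (\<alpha> - 1 - \<delta>)"
        by (simp add: mult.left_commute powr_add[symmetric])
      also have "\<dots> \<le> max M C * t powr (\<alpha> - 1 - \<delta>)"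
        by (intro mult_right_mono) auto
      finally show ?thesis .
    qed
    show "(\<lambda>t. t powr (\<alpha> - 1) * \<psi> t) \<in> borel_measurable borel"
      by measurable
  qed (use assms in simp_all)
qed

lemma tendsto_powr_mult_decaying_at_top:
  assumes "\<alpha> < \<delta>"
  shows "((\<lambda>t. t powr \<alpha> * \<psi> t) \<longlongrightarrow> 0) at_top"
proof (rule Lim_null_comparison)
  show "\<forall>\<^sub>F t in at_top. norm (t powr \<alpha> * \<psi> t) \<le> C * t powr (\<alpha> - \<delta>)"
    using eventually_gt_at_top[of 0]
  proof eventually_elim
    case (elim t)
    have "norm (t powr \<alpha> * \<psi> t) = t powr \<alpha> * \<bar>\<psi> t\<bar>"
      by (simp add: abs_mult)
    also have "\<dots> \<le> t powr \<alpha> * (C * t powr - \<delta>)"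
      using elim by (intro mult_left_mono decay) auto
    also have "\<dots> = C * t powr (\<alpha> - \<delta>)"
      by (simp add: mult.left_commute powr_add[symmetric])
    finally show ?case .
  qed
  show "((\<lambda>t. C * t powr (\<alpha> - \<delta>)) \<longlongrightarrow> 0) at_top"
    using assms by (intro tendsto_mult_right_zero tendsto_neg_powr filterlim_ident) auto
qed

lemma tendsto_decaying_at_top: "(\<psi> \<longlongrightarrow> 0) at_top"
proof -
  have eq: "\<forall>\<^sub>F t in at_top. t powr 0 * \<psi> t = \<psi> t"
    using eventually_gt_at_top[of "0::real"] by eventually_elim simp
  show ?thesis
    using tendsto_powr_mult_decaying_at_top[OF \<open>0 < \<delta>\<close>] unfolding tendsto_cong[OF eq] .
qed

lemma tendsto_decaying_at_infinity:
  assumes even: "\<And>x. \<psi> (- x) = \<psi> x"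
  shows "(\<psi> \<longlongrightarrow> 0) at_infinity"
  unfolding at_infinity_eq_at_top_bot
  using tendsto_decaying_at_top by (intro filterlim_sup) (simp_all add: filterlim_at_bot_mirror even)

lemma set_integrable_decaying:
  assumes "1 < \<delta>"
  shows "set_integrable lborel {0<..} \<psi>"
proof -
  have "set_integrable lborel {0<..} (\<lambda>t. t powr (1 - 1) * \<psi> t)"
    using assms by (intro set_integrable_powr_mult) auto
  then show ?thesis
    by (rule set_integrable_cong[THEN iffD1, rotated -1]) auto
qed

lemma eq_neg_set_integral_deriv:
  assumes "0 \<le> s"
  shows "\<psi> s = - (LBINT t:{s<..}. \<psi>' t)"
proof -
  have Ioi: "einterval (ereal s) \<infinity> = {s<..}"
    by (auto simp: einterval_def)
  have "(LBINT t=ereal s..\<infinity>. \<psi>' t) = 0 - \<psi> s"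
  proof (rule interval_integral_FTC_integrable)
    show "(\<psi> has_vector_derivative \<psi>' x) (at x)" for x
      using has_deriv[of x] by (simp add: has_real_derivative_iff_has_vector_derivative)
    show "isCont \<psi>' x" for x
      using deriv_cont by (simp add: continuous_on_eq_continuous_at)
    show "set_integrable lborel (einterval (ereal s) \<infinity>) \<psi>'"
      unfolding Ioi by (rule set_integrable_subset[OF set_integrable_deriv]) (use assms in auto)
    have "(\<psi> \<longlongrightarrow> \<psi> s) (at_right s)"
      using isCont_decaying[of s] unfolding isCont_def by (rule tendsto_within_subset) simp
    then show "((\<psi> \<circ> real_of_ereal) \<longlongrightarrow> \<psi> s) (at_right (ereal s))"
      by (simp add: ereal_tendsto_simps1)
    show "((\<psi> \<circ> real_of_ereal) \<longlongrightarrow> 0) (at_left \<infinity>)"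
      using tendsto_decaying_at_top by (simp add: ereal_tendsto_simps1)
  qed simp
  then show ?thesis
    by (simp add: interval_lebesgue_integral_def Ioi)
qed

lemma set_integral_powr_mult_eq_neg:
  assumes "0 < \<alpha>" "\<alpha> < \<delta>"
  shows "(LBINT t:{0<..}. \<alpha> * t powr (\<alpha> - 1) * \<psi> t) = - (LBINT t:{0<..}. t powr \<alpha> * \<psi>' t)"
proof -
  define f where "f t = \<alpha> * t powr (\<alpha> - 1) * \<psi> t" for t
  define f' where "f' t = t powr \<alpha> * \<psi>' t" for t
  have Ioi: "einterval 0 \<infinity> = {0<..}"
    by (auto simp: einterval_def zero_ereal_def)
  have f: "set_integrable lborel {0<..} f"
    unfolding f_def mult.assoc using assms by (intro set_integrable_mult_right set_integrable_powr_mult) auto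
  have f': "set_integrable lborel {0<..} f'"
    unfolding f'_def using assms by (intro set_integrable_powr_mult_deriv) auto
  have "(LBINT t=0..\<infinity>. f t + f' t) = 0 - 0"
  proof (rule interval_integral_FTC_integrable[where F = "\<lambda>t. t powr \<alpha> * \<psi> t"])
    show "((\<lambda>t. t powr \<alpha> * \<psi> t) has_vector_derivative f t + f' t) (at t)" if "0 < ereal t" for t
    proof -
      have "t > 0"
        using that by (simp add: zero_ereal_def)
      then have "((\<lambda>t. t powr \<alpha> * \<psi> t) has_real_derivative f t + f' t) (at t)"
        unfolding f_def f'_def by (auto intro!: derivative_eq_intros has_deriv simp: algebra_simps)
      then show ?thesis
        by (simp add: has_real_derivative_iff_has_vector_derivative)
    qed
    show "isCont (\<lambda>t. f t + f' t) t" if "0 < ereal t" for t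
    proof -
      have "t > 0" "isCont \<psi>' t"
        using that deriv_cont by (simp_all add: zero_ereal_def continuous_on_eq_continuous_at)
      then show ?thesis
        unfolding f_def f'_def using isCont_decaying[of t] by (intro continuous_intros) auto
    qed
    show "set_integrable lborel (einterval 0 \<infinity>) (\<lambda>t. f t + f' t)"
      unfolding Ioi using f f' by (rule set_integral_add)
    have "((\<lambda>t. t powr \<alpha> * \<psi> t) \<longlongrightarrow> 0 * \<psi> 0) (at_right 0)"
      using \<open>\<alpha> > 0\<close> isCont_decaying[of 0]
      by (intro tendsto_intros tendsto_zero_powrI)
        (auto simp: isCont_def filterlim_at_split eventually_at_right_less[THEN eventually_mono])
    then show "(((\<lambda>t. t powr \<alpha> * \<psi> t) \<circ> real_of_ereal) \<longlongrightarrow> 0) (at_right 0)"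
      by (simp add: zero_ereal_def ereal_tendsto_simps1)
    show "(((\<lambda>t. t powr \<alpha> * \<psi> t) \<circ> real_of_ereal) \<longlongrightarrow> 0) (at_left \<infinity>)"
      using tendsto_powr_mult_decaying_at_top[OF \<open>\<alpha> < \<delta>\<close>] by (simp add: ereal_tendsto_simps1)
  qed simp
  then have "(LBINT t:{0<..}. f t) + (LBINT t:{0<..}. f' t) = 0"
    by (simp add: interval_lebesgue_integral_def Ioi set_integral_add(2)[OF f f'])
  then show ?thesis
    by (simp add: f_def f'_def)
qed

lemma dil_eq_neg_integral_deriv:
  assumes even: "\<And>x. \<psi> (- x) = \<psi> x" and "a > 0"
  shows "\<psi> ((x - y) / a)
    = - (\<integral>t. indicator {0<..} t * \<psi>' t * indicator {x - a * t<..<x + a * t} y \<partial>lborel)"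
proof -
  have "\<psi> ((x - y) / a) = \<psi> (\<bar>x - y\<bar> / a)"
    using even[of "(x - y) / a"] by (cases "x \<le> y") (auto simp: minus_divide_left)
  also have "\<dots> = - (LBINT t:{\<bar>x - y\<bar> / a<..}. \<psi>' t)"
    using \<open>a > 0\<close> by (intro eq_neg_set_integral_deriv) simp
  also have "(LBINT t:{\<bar>x - y\<bar> / a<..}. \<psi>' t)
      = (\<integral>t. indicator {0<..} t * \<psi>' t * indicator {x - a * t<..<x + a * t} y \<partial>lborel)"
    unfolding set_lebesgue_integral_def
  proof (intro Bochner_Integration.integral_cong refl)
    fix t
    have "\<bar>x - y\<bar> / a < t \<longleftrightarrow> \<bar>x - y\<bar> < a * t"
      using \<open>a > 0\<close> by (simp add: pos_divide_less_eq mult.commute)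
    also have "\<dots> \<longleftrightarrow> 0 < a * t \<and> \<bar>x - y\<bar> < a * t"
      by auto
    also have "\<dots> \<longleftrightarrow> 0 < t \<and> x - a * t < y \<and> y < x + a * t"
      using \<open>a > 0\<close> by (auto simp: abs_less_iff zero_less_mult_iff)
    finally show "indicator {\<bar>x - y\<bar> / a<..} t *\<^sub>R \<psi>' t
        = indicator {0<..} t * \<psi>' t * indicator {x - a * t<..<x + a * t} y"
      by (simp add: indicator_def)
  qed
  finally show ?thesis .
qed

lemma conv_meas_dil_eq_set_integral_deriv:
  assumes even: "\<And>x. \<psi> (- x) = \<psi> x"
    and "prob_space \<mu>" and [measurable_cong]: "sets \<mu> = sets borel" and "a > 0"
  shows "conv_meas (dil \<psi> a) \<mu> x = - (LBINT t:{0<..}. \<psi>' t * measure \<mu> {x - a * t<..<x + a * t})"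
proof -
  interpret prob_space \<mu> by fact
  interpret pair_sigma_finite \<mu> lborel ..
  define h where "h y t = indicator {0<..} t * \<psi>' t * indicator {x - a * t<..<x + a * t} y" for y t
  have "case_prod h = (\<lambda>(y, t). indicator {0<..} t * \<psi>' t * (if x - a * t < y \<and> y < x + a * t then 1 else 0))"
    by (auto simp: fun_eq_iff h_def indicator_def)
  then have [measurable]: "case_prod h \<in> borel_measurable (\<mu> \<Otimes>\<^sub>M lborel)"
    by simp
  have "integrable lborel (\<lambda>t. indicator {0<..} t * \<bar>\<psi>' t\<bar>)"
    using set_integrable_abs[OF set_integrable_deriv] by (simp add: set_integrable_def)
  then have "integrable (\<mu> \<Otimes>\<^sub>M lborel) (\<lambda>(y, t). indicator {0<..} t * \<bar>\<psi>' t\<bar>)"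
    by (intro Fubini_integrable) auto
  then have integrable_h: "integrable (\<mu> \<Otimes>\<^sub>M lborel) (case_prod h)"
    by (rule Bochner_Integration.integrable_bound) (auto simp: h_def indicator_def abs_mult)
  have "conv_meas (dil \<psi> a) \<mu> x = - (\<integral>y. (\<integral>t. h y t \<partial>lborel) \<partial>\<mu>)"
    unfolding h_def using \<open>a > 0\<close> by (simp add: conv_meas_def dil_def dil_eq_neg_integral_deriv[OF even])
  also have "(\<integral>y. (\<integral>t. h y t \<partial>lborel) \<partial>\<mu>) = (\<integral>t. (\<integral>y. h y t \<partial>\<mu>) \<partial>lborel)"
    by (rule Fubini_integral[OF integrable_h, symmetric])
  also have "\<dots> = (LBINT t:{0<..}. \<psi>' t * measure \<mu> {x - a * t<..<x + a * t})"
    by (simp add: h_def set_lebesgue_integral_def mult.assoc)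
  finally show ?thesis .
qed

lemma powr_conv_meas_dil_eq_set_integral:
  assumes even: "\<And>x. \<psi> (- x) = \<psi> x"
    and "prob_space \<mu>" and "sets \<mu> = sets borel" and "a > 0"
  shows "a powr (- \<alpha>) * conv_meas (dil \<psi> a) \<mu> x
    = (LBINT t:{0<..}. (- (2 powr \<alpha>) * (t powr \<alpha> * \<psi>' t))
        * (measure \<mu> {x - a * t<..<x + a * t} / (2 * (a * t)) powr \<alpha>))"
proof -
  have "(LBINT t:{0<..}. (- (2 powr \<alpha>) * (t powr \<alpha> * \<psi>' t))
        * (measure \<mu> {x - a * t<..<x + a * t} / (2 * (a * t)) powr \<alpha>))
      = (LBINT t:{0<..}. (- (a powr (- \<alpha>))) * (\<psi>' t * measure \<mu> {x - a * t<..<x + a * t}))"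
    using \<open>a > 0\<close> by (intro set_lebesgue_integral_cong) (auto simp: powr_mult powr_minus field_simps)
  also have "\<dots> = (- (a powr (- \<alpha>))) * (LBINT t:{0<..}. \<psi>' t * measure \<mu> {x - a * t<..<x + a * t})"
    by (rule set_integral_mult_right)
  also have "\<dots> = a powr (- \<alpha>) * conv_meas (dil \<psi> a) \<mu> x"
    by (simp add: conv_meas_dil_eq_set_integral_deriv[OF assms])
  finally show ?thesis ..
qed

lemma tendsto_powr_conv_meas_dil:
  assumes even: "\<And>x. \<psi> (- x) = \<psi> x"
    and prob: "prob_space \<mu>" and sets: "sets \<mu> = sets borel"
    and "0 < \<alpha>" "\<alpha> < \<delta>"
    and lim: "((\<lambda>r. measure \<mu> {x - r<..<x + r} / (2 * r) powr \<alpha>) \<longlongrightarrow> L) (at_right 0)"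
  shows "((\<lambda>a. a powr (- \<alpha>) * conv_meas (dil \<psi> a) \<mu> x)
          \<longlongrightarrow> (LBINT y:{0<..}. \<alpha> * 2 powr \<alpha> * y powr (\<alpha> - 1) * \<psi> y) * L) (at_right 0)"
proof -
  interpret prob_space \<mu> by fact
  define g where "g = (\<lambda>r. measure \<mu> {x - r<..<x + r} / (2 * r) powr \<alpha>)"
  define \<Phi> where "\<Phi> = (\<lambda>t. - (2 powr \<alpha>) * (t powr \<alpha> * \<psi>' t))"
  have "mono (\<lambda>r. measure \<mu> {x - r<..<x + r})"
    by (intro monoI finite_measure_mono) (auto simp: sets)
  then have [measurable]: "(\<lambda>r. measure \<mu> {x - r<..<x + r}) \<in> borel_measurable borel"
    by (rule borel_measurable_mono)
  have "g \<in> borel_measurable borel"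
    unfolding g_def by measurable
  moreover obtain M where "\<forall>r>0. \<bar>g r\<bar> \<le> M"
    using measure_Ioo_ratio_bounded[OF prob \<open>0 < \<alpha>\<close> lim] unfolding g_def by blast
  moreover have "set_integrable lborel {0<..} \<Phi>"
    unfolding \<Phi>_def using \<open>0 < \<alpha>\<close> \<open>\<alpha> < \<delta>\<close>
    by (intro set_integrable_mult_right set_integrable_powr_mult_deriv) auto
  ultimately have lim_\<Phi>: "((\<lambda>a. LBINT t:{0<..}. \<Phi> t * g (a * t)) \<longlongrightarrow> (LBINT t:{0<..}. \<Phi> t) * L) (at_right 0)"
    using lim[folded g_def] by (intro tendsto_set_integral_mult_dilation) auto
  have eventually_eq: "\<forall>\<^sub>F a in at_right 0.
      (LBINT t:{0<..}. \<Phi> t * g (a * t)) = a powr (- \<alpha>) * conv_meas (dil \<psi> a) \<mu> x"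
    using eventually_at_right_less[of "0::real"]
    by eventually_elim (simp add: \<Phi>_def g_def powr_conv_meas_dil_eq_set_integral[OF even prob sets])
  have integral_\<Phi>: "(LBINT t:{0<..}. \<Phi> t) = (LBINT y:{0<..}. \<alpha> * 2 powr \<alpha> * y powr (\<alpha> - 1) * \<psi> y)"
  proof -
    have "(LBINT y:{0<..}. \<alpha> * 2 powr \<alpha> * y powr (\<alpha> - 1) * \<psi> y)
        = 2 powr \<alpha> * (LBINT y:{0<..}. \<alpha> * y powr (\<alpha> - 1) * \<psi> y)"
      by (subst set_integral_mult_right[symmetric]) (simp add: mult_ac)
    moreover have "(LBINT t:{0<..}. \<Phi> t) = (- (2 powr \<alpha>)) * (LBINT t:{0<..}. t powr \<alpha> * \<psi>' t)"
      unfolding \<Phi>_def by (rule set_integral_mult_right)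
    ultimately show ?thesis
      using set_integral_powr_mult_eq_neg[OF \<open>0 < \<alpha>\<close> \<open>\<alpha> < \<delta>\<close>] by simp
  qed
  show ?thesis
    using lim_\<Phi> unfolding integral_\<Phi> tendsto_cong[OF eventually_eq] .
qed

end

lemma one_le_jbr: "1 \<le> jbr x"
  unfolding jbr_def by (rule real_le_rsqrt) simp

lemma abs_le_jbr: "\<bar>x\<bar> \<le> jbr x"
  unfolding jbr_def by (rule real_le_rsqrt) simp

lemma jbr_decay_bounds:
  fixes \<psi> \<psi>' :: "real \<Rightarrow> real"
  assumes bound: "\<And>x. \<bar>\<psi> x\<bar> + \<bar>x * \<psi>' x\<bar> \<le> C * jbr x powr - \<delta>" and "0 \<le> \<delta>"
  shows "\<bar>\<psi> x\<bar> \<le> C"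
    and "0 < y \<Longrightarrow> \<bar>\<psi> y\<bar> \<le> C * y powr - \<delta>"
    and "0 < y \<Longrightarrow> \<bar>\<psi>' y\<bar> \<le> C * y powr (- \<delta> - 1)"
proof -
  have jbr_pos: "0 < jbr x" for x
    using one_le_jbr[of x] by linarith
  have "0 \<le> C * jbr 0 powr - \<delta>"
    using bound[of 0] by (meson abs_ge_zero add_nonneg_nonneg order_trans)
  then have "0 \<le> C"
    using jbr_pos[of 0] by (simp add: zero_le_mult_iff)
  have "1 \<le> jbr x powr \<delta>"
    using one_le_jbr \<open>0 \<le> \<delta>\<close> by (rule ge_one_powr_ge_zero)
  then have "jbr x powr - \<delta> \<le> 1"
    by (simp add: powr_minus inverse_le_1_iff)
  then show "\<bar>\<psi> x\<bar> \<le> C"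
    using bound[of x] mult_left_mono[OF _ \<open>0 \<le> C\<close>] by fastforce
  assume "0 < y"
  then have "C * jbr y powr - \<delta> \<le> C * y powr - \<delta>"
    using \<open>0 \<le> \<delta>\<close> \<open>0 \<le> C\<close> abs_le_jbr[of y] by (intro mult_left_mono powr_mono2') auto
  then have y_bound: "\<bar>\<psi> y\<bar> + y * \<bar>\<psi>' y\<bar> \<le> C * y powr - \<delta>"
    using bound[of y] \<open>0 < y\<close> by (simp add: abs_mult)
  moreover have "0 \<le> y * \<bar>\<psi>' y\<bar>"
    using \<open>0 < y\<close> by simp
  ultimately show "\<bar>\<psi> y\<bar> \<le> C * y powr - \<delta>"
    by linarith
  have "y * \<bar>\<psi>' y\<bar> \<le> C * y powr - \<delta>"
    using y_bound abs_ge_zero[of "\<psi> y"] by linarith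
  also have "\<dots> = y * (C * y powr (- \<delta> - 1))"
    using \<open>0 < y\<close> by (simp add: powr_diff)
  finally show "\<bar>\<psi>' y\<bar> \<le> C * y powr (- \<delta> - 1)"
    using \<open>0 < y\<close> by simp
qed

lemma decaying_if_C1_jbr_decay:
  fixes \<psi> :: "real \<Rightarrow> real"
  assumes "\<psi> C1_differentiable_on UNIV"
    and "\<exists>C>0. \<exists>\<delta>>1. \<forall>x. \<bar>\<psi> x\<bar> + \<bar>x * deriv \<psi> x\<bar> \<le> C * jbr x powr (- \<delta>)"
  obtains \<psi>' C \<delta> where "\<And>x. (\<psi> has_real_derivative \<psi>' x) (at x)" "continuous_on UNIV \<psi>'"
    "\<And>y. 0 < y \<Longrightarrow> \<bar>\<psi> y\<bar> \<le> C * y powr - \<delta>" "\<And>y. 0 < y \<Longrightarrow> \<bar>\<psi>' y\<bar> \<le> C * y powr (- \<delta> - 1)"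
    "0 < \<delta>" "1 < \<delta>" "\<And>x. \<bar>\<psi> x\<bar> \<le> C"
proof -
  obtain \<psi>' where has_deriv: "\<And>x. (\<psi> has_real_derivative \<psi>' x) (at x)"
    and deriv_cont: "continuous_on UNIV \<psi>'"
    using assms(1) by (auto simp: C1_differentiable_on_def has_real_derivative_iff_has_vector_derivative)
  then have "deriv \<psi> = \<psi>'"
    by (simp add: DERIV_imp_deriv fun_eq_iff)
  then obtain C \<delta> where "1 < \<delta>" and bound: "\<And>x. \<bar>\<psi> x\<bar> + \<bar>x * \<psi>' x\<bar> \<le> C * jbr x powr - \<delta>"
    using assms(2) by auto
  moreover have "0 \<le> \<delta>"
    using \<open>1 < \<delta>\<close> by simp
  ultimately show thesis
    using that[OF has_deriv deriv_cont jbr_decay_bounds(2,3)[OF bound] _ _ jbr_decay_bounds(1)[OF bound]]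
    by simp
qed

theorem theorem2p2:
  fixes \<psi> :: "real \<Rightarrow> real" and \<mu> :: "real measure"
  assumes C1: "\<psi> C1_differentiable_on UNIV"
    and psi0: "\<psi> 0 = 1"
    and even: "\<And>x. \<psi> (- x) = \<psi> x"
    and decay: "\<exists>C>0. \<exists>\<delta>>1. \<forall>x. \<bar>\<psi> x\<bar> + \<bar>x * deriv \<psi> x\<bar> \<le> C * jbr x powr (- \<delta>)"
    and Apsi: "(\<integral>x. \<psi> x \<partial>lborel) \<noteq> 0"
    and prob: "prob_space \<mu>"
    and borel: "sets \<mu> = sets borel"
  shows
    "(\<forall>f :: real \<Rightarrow> real. continuous_on UNIV f \<and> (\<exists>K. compact K \<and> (\<forall>x. x \<notin> K \<longrightarrow> f x = 0)) \<longrightarrow>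
        ((\<lambda>a. \<integral>x. conv_meas (dil_tilde \<psi> a) \<mu> x * f x \<partial>lborel)
          \<longlongrightarrow> (\<integral>x. \<psi> x \<partial>lborel) * (\<integral>x. f x \<partial>\<mu>)) (at_right 0))
   \<and> (\<forall>x. ((\<lambda>a. conv_meas (dil \<psi> a) \<mu> x) \<longlongrightarrow> measure \<mu> {x}) (at_right 0))
   \<and> (\<forall>\<alpha> x L. 0 < \<alpha> \<and> \<alpha> \<le> 1 \<and>
        ((\<lambda>\<epsilon>. measure \<mu> {x - \<epsilon> <..< x + \<epsilon>} / (2 * \<epsilon>) powr \<alpha>) \<longlongrightarrow> L) (at_right 0) \<longrightarrow>
        ((\<lambda>a. a powr (- \<alpha>) * conv_meas (dil \<psi> a) \<mu> x)
          \<longlongrightarrow> (LBINT y:{0<..}. \<alpha> * 2 powr \<alpha> * y powr (\<alpha> - 1) * \<psi> y) * L) (at_right 0))"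
proof -
  obtain \<psi>' C \<delta> where decaying:
      "\<And>x. (\<psi> has_real_derivative \<psi>' x) (at x)" "continuous_on UNIV \<psi>'"
      "\<And>y. 0 < y \<Longrightarrow> \<bar>\<psi> y\<bar> \<le> C * y powr - \<delta>" "\<And>y. 0 < y \<Longrightarrow> \<bar>\<psi>' y\<bar> \<le> C * y powr (- \<delta> - 1)"
      "0 < \<delta>"
    and "1 < \<delta>" and bounded: "\<And>x. \<bar>\<psi> x\<bar> \<le> C"
    using decaying_if_C1_jbr_decay[OF C1 decay] by blast
  have measurable: "\<psi> \<in> borel_measurable borel"
    by (rule measurable_decaying(1)[OF decaying])
  have integrable: "integrable lborel \<psi>"
    using measurable even set_integrable_decaying[OF decaying \<open>1 < \<delta>\<close>] by (rule integrable_lborel_if_even)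
  show ?thesis
    apply (intro conjI allI impI; (elim conjE exE)?)
    subgoal for f K
      using bounded_if_compact_support[of f K] tendsto_integral_conv_meas_dil_tilde_mult[OF prob borel integrable]
      by blast
    subgoal for x
      using tendsto_decaying_at_infinity[OF decaying even]
      by (rule conv_meas_dil_tendsto_measure_singleton[OF prob borel measurable bounded psi0, where x = x])
    subgoal for \<alpha> x L
      by (rule tendsto_powr_conv_meas_dil[OF decaying even prob borel, where x = x and L = L])
        (use \<open>1 < \<delta>\<close> in auto)
    done
qed

end
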